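(* Let $d=1$, $S>0$, $c>0$, $\mu>0$, and consider the fields $\phi|_\pm$ and $\phi_m|_\pm$ described in the context. If for some $m\in\mathbb{N}$, some test function $f_m$ and some test function $f$ on $\mathbb{R}$ that does not vanish identically one has $\phi_m|_\pm(f_m)=\phi|_\pm(f)$, then $f$ cannot be supported in an interval of length smaller than $\frac{8}{\pi}S$.
   Context: $\mathbb{N}=\{0,1,\dots\}$. $q_0=0$; for $p\ge1$, $q_{2p}$ is the unique solution of $c^{-1}\tan(qS)=-q$ in $((p-\frac12)\frac\pi S,p\frac\pi S)$ and $q_{2p-1}$ the unique solution of $q\tan(qS)=c^{-1}$ in $((p-1)\frac\pi S,(p-\frac12)\frac\pi S)$. Let $\omega_m=\sqrt{q_m^2+\mu^2}$. Let $c_m>0$ be the normalization with $\int_{-S}^S|c_mS^{-1/2}\chi_m|^2dz+c\sum_{z=\pm S}|c_mS^{-1/2}\chi_m(z)|^2=1$, where $\chi_m=\cos(q_m z)$ ($m$ even), $\sin(q_mz)$ ($m$ odd); set $d_m=c_mS^{-1/2}\chi_m(S)$ (a non-zero real number). On the symmetric Fock space over $l^2(\mathbb{N})$ with $[a_m,a_{m'}^*]=\delta_{mm'}$, define the operator-valued distributions on $\mathbb{R}$ (time $t$) $\phi_m|_\pm(t)=(\pm)^m(2\omega_m)^{-1/2}(e^{-i\omega_mt}a_m+e^{i\omega_mt}a_m^* )$ and $\phi|_\pm(t)=\sum_m(\pm)^md_m(2\omega_m)^{-1/2}(e^{-i\omega_mt}a_m+e^{i\omega_mt}a_m^* )$;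 $\phi|_\pm$ is the restriction to the boundary component $z=\pm S$ of the quantized field of the $1+1$-dimensional strip with generalized Wentzell boundary conditions. Smearing: $\phi(f)=\int f(t)\phi(t)\,dt$. *)

theory Defs
  imports "HOL-Analysis.Analysis"
begin

definition smooth_fun :: "(real \<Rightarrow> complex) \<Rightarrow> bool" where
  "smooth_fun f \<longleftrightarrow> (\<exists>D :: nat \<Rightarrow> real \<Rightarrow> complex. D 0 = f \<and>
      (\<forall>k t. (D k has_vector_derivative D (Suc k) t) (at t)))"

definition test_fun :: "(real \<Rightarrow> complex) \<Rightarrow> bool" where
  "test_fun f \<longleftrightarrow> smooth_fun f \<and> bounded {t. f t \<noteq> 0}"

definition qm :: "real \<Rightarrow> real \<Rightarrow> nat \<Rightarrow> real" where
  "qm S c m =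
     (if m = 0 then 0
      else if even m then
        (THE q. (real (m div 2) - 1/2) * pi / S < q \<and> q < real (m div 2) * pi / S \<and>
                 tan (q * S) / c = - q)
      else
        (THE q. (real ((m + 1) div 2) - 1) * pi / S < q \<and> q < (real ((m + 1) div 2) - 1/2) * pi / S \<and>
                 q * tan (q * S) = 1 / c))"

definition omega :: "real \<Rightarrow> real \<Rightarrow> real \<Rightarrow> nat \<Rightarrow> real" where
  "omega S c \<mu> m = sqrt ((qm S c m)\<^sup>2 + \<mu>\<^sup>2)"

definition chi :: "real \<Rightarrow> real \<Rightarrow> nat \<Rightarrow> real \<Rightarrow> real" where
  "chi S c m z = (if even m then cos (qm S c m * z) else sin (qm S c m * z))"

definition cnorm :: "real \<Rightarrow> real \<Rightarrow> nat \<Rightarrow> real" where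
  "cnorm S c m = (THE x. x > 0 \<and>
      integral {-S..S} (\<lambda>z. \<bar>x * S powr (-1/2) * chi S c m z\<bar>\<^sup>2)
      + c * (\<bar>x * S powr (-1/2) * chi S c m S\<bar>\<^sup>2 + \<bar>x * S powr (-1/2) * chi S c m (-S)\<bar>\<^sup>2) = 1)"

definition dm :: "real \<Rightarrow> real \<Rightarrow> nat \<Rightarrow> real" where
  "dm S c m = cnorm S c m * S powr (-1/2) * chi S c m S"

text \<open>An operator of the form  sum_n (A n * a_n + B n * a_n^* )  on the symmetric Fock space
  over l^2(N) is represented by its coefficient pair (A, B).  Since the operators a_n, a_n^*
  are linearly independent (A is recovered from the action on one-particle states and B from
  the action on the vacuum), equality of such operators is equality of the coefficient pairs.\<close>
type_synonym fock_lin = "(nat \<Rightarrow> complex) \<times> (nat \<Rightarrow> complex)"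

definition smear :: "(real \<Rightarrow> complex) \<Rightarrow> real \<Rightarrow> complex" where
  "smear f w = integral UNIV (\<lambda>t. f t * exp (- \<i> * complex_of_real (w * t)))"

text \<open>sg = 1 for the boundary component z = S, sg = -1 for z = -S.\<close>
definition phi_m_bdry :: "real \<Rightarrow> real \<Rightarrow> real \<Rightarrow> real \<Rightarrow> nat \<Rightarrow> (real \<Rightarrow> complex) \<Rightarrow> fock_lin" where
  "phi_m_bdry S c \<mu> sg m f =
     ((\<lambda>n. if n = m then complex_of_real (sg ^ m * (2 * omega S c \<mu> m) powr (-1/2))
                           * smear f (omega S c \<mu> m) else 0),
      (\<lambda>n. if n = m then complex_of_real (sg ^ m * (2 * omega S c \<mu> m) powr (-1/2))
                           * smear f (- omega S c \<mu> m) else 0))"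

definition phi_bdry :: "real \<Rightarrow> real \<Rightarrow> real \<Rightarrow> real \<Rightarrow> (real \<Rightarrow> complex) \<Rightarrow> fock_lin" where
  "phi_bdry S c \<mu> sg f =
     ((\<lambda>n. complex_of_real (sg ^ n * dm S c n * (2 * omega S c \<mu> n) powr (-1/2))
              * smear f (omega S c \<mu> n)),
      (\<lambda>n. complex_of_real (sg ^ n * dm S c n * (2 * omega S c \<mu> n) powr (-1/2))
              * smear f (- omega S c \<mu> n)))"

end

theory Submission
  imports Defs "HOL-Complex_Analysis.Complex_Analysis" "HOL-Real_Asymp.Real_Asymp"
begin

(* If f were supported in an interval [a, b] with b - a < 8 S / pi, its Fourier-Laplace transform,
   centred at (a + b) / 2, would be a non-zero entire function of exponential type tau = (b - a) / 2.
   The field identity forces it to vanish at every +-omega_n with n ~= m, and the spectral bounds give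
   omega_n <= n pi / (2 S) + mu.  Jensen's formula on discs of radius ~ N pi / (2 S) then yields
   2 N - O(log N) <= tau N pi / (2 S) + O(1) for all N, i.e. tau pi / (2 S) >= 2. *)

section \<open>The spectrum of the strip\<close>

lemma tan_eq_nonincreasing_unique:
  fixes r :: "real \<Rightarrow> real" and k :: nat
  assumes S: "S > 0" and lo: "real k * pi - pi / 2 \<le> lo * S" and hi: "hi * S \<le> real k * pi + pi / 2"
    and r: "\<And>u v. lo < u \<Longrightarrow> u < v \<Longrightarrow> v < hi \<Longrightarrow> r v \<le> r u"
    and x: "x \<in> {lo<..<hi}" "tan (x * S) = r x" and y: "y \<in> {lo<..<hi}" "tan (y * S) = r y"
  shows "x = y"
proof -
  have tan_less: "tan (u * S) < tan (v * S)" if "lo < u" "u < v" "v < hi" for u v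
  proof -
    have "lo * S < u * S" "u * S < v * S" "v * S < hi * S"
      using that S by (simp_all add: mult_strict_right_mono)
    then have "tan (u * S - real k * pi) < tan (v * S - real k * pi)"
      using lo hi by (intro tan_monotone) auto
    then show ?thesis using tan_periodic_nat[of "_ - real k * pi" k] by simp
  qed
  show ?thesis
  proof (rule ccontr)
    assume "x \<noteq> y"
    then consider "x < y" | "y < x" by linarith
    then show False
      using tan_less[of x y] tan_less[of y x] r[of x y] r[of y x] x y by (cases; force)
  qed
qed

lemma qm_even:
  assumes S: "S > 0" and c: "c > 0" and n: "n > 0" "even n"
  shows "(real n - 1) * pi / (2 * S) < qm S c n \<and> qm S c n < real n * pi / (2 * S)
         \<and> tan (qm S c n * S) = - c * qm S c n"
proof -
  define p where "p = n div 2"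
  have np: "real n = 2 * real p" and p: "p \<ge> 1" using n by (auto simp: p_def elim!: evenE)
  define lo hi where "lo = (real p - 1/2) * pi / S" and "hi = real p * pi / S"
  have loS: "lo * S = real p * pi - pi / 2" and hiS: "hi * S = real p * pi"
    using S by (simp_all add: lo_def hi_def field_simps)
  define P where "P = (\<lambda>q. lo < q \<and> q < hi \<and> tan (q * S) = - c * q)"
  have qm_eq: "qm S c n = (THE q. P q)"
    using n c unfolding qm_def P_def lo_def hi_def p_def by (simp add: field_simps)
  \<comment> \<open>Clearing the denominator of tan gives a function that changes sign on [lo, hi].\<close>
  define \<psi> where "\<psi> = (\<lambda>q. (-1) ^ p * (sin (q * S) + c * q * cos (q * S)))"
  have "\<psi> lo = -1" "\<psi> hi = c * hi" "continuous_on {lo..hi} \<psi>"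
    unfolding \<psi>_def loS hiS by (auto simp: sin_diff cos_diff simp flip: power_mult_distrib intro!: continuous_intros)
  moreover have "lo < hi" "c * hi > 0" using S c p by (simp_all add: lo_def hi_def field_simps)
  ultimately obtain x where x: "lo \<le> x" "x \<le> hi" "\<psi> x = 0"
    using IVT'[of \<psi> lo 0 hi] by force
  then have x: "lo < x" "x < hi" "\<psi> x = 0"
    using \<open>\<psi> lo = -1\<close> \<open>\<psi> hi = c * hi\<close> \<open>c * hi > 0\<close> by (auto simp: order_le_less)
  have root: "sin (x * S) + c * x * cos (x * S) = 0" using x(3) by (simp add: \<psi>_def)
  have "cos (x * S) \<noteq> 0"
  proof
    assume "cos (x * S) = 0"
    with root have "sin (x * S) = 0" by simp
    with \<open>cos (x * S) = 0\<close> show False using sin_cos_squared_add[of "x * S"] by simp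
  qed
  then have Px: "P x" using x root by (auto simp: P_def tan_def field_simps add_eq_0_iff)
  have "qm S c n = x"
    unfolding qm_eq
  proof (rule the_equality)
    show "P x" by (fact Px)
  next
    fix y assume "P y"
    then show "y = x"
      using tan_eq_nonincreasing_unique[of S p lo hi "\<lambda>q. - c * q" y x] S Px loS hiS c
      unfolding P_def by auto
  qed
  then show ?thesis using Px S unfolding P_def lo_def hi_def by (simp add: np field_simps)
qed

lemma qm_odd:
  assumes S: "S > 0" and c: "c > 0" and n: "odd n"
  shows "(real n - 1) * pi / (2 * S) < qm S c n \<and> qm S c n < real n * pi / (2 * S)
         \<and> qm S c n * tan (qm S c n * S) = 1 / c"
proof -
  define k where "k = n div 2"
  have nk: "n = 2 * k + 1" using n by (simp add: k_def)
  define lo hi where "lo = real k * pi / S" and "hi = (real k + 1/2) * pi / S"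
  have loS: "lo * S = real k * pi" and hiS: "hi * S = real k * pi + pi / 2"
    using S by (simp_all add: lo_def hi_def field_simps)
  have lo_nonneg: "lo \<ge> 0" using S by (simp add: lo_def)
  define P where "P = (\<lambda>q. lo < q \<and> q < hi \<and> q * tan (q * S) = 1 / c)"
  have qm_eq: "qm S c n = (THE q. P q)"
    using n unfolding qm_def P_def lo_def hi_def by (simp add: nk add.commute)
  define \<psi> where "\<psi> = (\<lambda>q. (-1) ^ k * (q * sin (q * S) - cos (q * S) / c))"
  have "\<psi> lo = - 1 / c" "\<psi> hi = hi" "continuous_on {lo..hi} \<psi>"
    unfolding \<psi>_def loS hiS using c
    by (auto simp: sin_add cos_add simp flip: power_mult_distrib intro!: continuous_intros)
  moreover have "lo < hi" "hi > 0" using S by (simp_all add: lo_def hi_def field_simps add_pos_nonneg)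
  ultimately obtain x where "lo \<le> x" "x \<le> hi" "\<psi> x = 0"
    using IVT'[of \<psi> lo 0 hi] c by force
  then have x: "lo < x" "x < hi" "\<psi> x = 0"
    using \<open>\<psi> lo = - 1 / c\<close> \<open>\<psi> hi = hi\<close> \<open>hi > 0\<close> c by (auto simp: order_le_less)
  have root: "x * sin (x * S) - cos (x * S) / c = 0" using x(3) by (simp add: \<psi>_def)
  have "cos (x * S) \<noteq> 0"
  proof
    assume "cos (x * S) = 0"
    with root x lo_nonneg have "sin (x * S) = 0" by simp
    with \<open>cos (x * S) = 0\<close> show False using sin_cos_squared_add[of "x * S"] by simp
  qed
  then have Px: "P x" using x root c by (auto simp: P_def tan_def field_simps)
  have pos: "q > 0" if "P q" for q using that lo_nonneg by (simp add: P_def)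
  have "qm S c n = x"
    unfolding qm_eq
  proof (rule the_equality)
    show "P x" by (fact Px)
  next
    fix y assume "P y"
    have "tan (q * S) = 1 / (c * q)" if "P q" for q
      using that pos[OF that] c by (auto simp: P_def field_simps)
    moreover have "1 / (c * v) \<le> 1 / (c * u)" if "lo < u" "u < v" for u v
      using that lo_nonneg c by (intro divide_left_mono mult_left_mono mult_pos_pos) auto
    ultimately show "y = x"
      using tan_eq_nonincreasing_unique[of S k lo hi "\<lambda>q. 1 / (c * q)" y x] S \<open>P y\<close> Px loS hiS
      unfolding P_def by auto
  qed
  then show ?thesis using Px S unfolding P_def lo_def hi_def by (simp add: nk field_simps)
qed

lemma qm_interval:
  assumes "S > 0" "c > 0" "n > 0"
  shows "(real n - 1) * pi / (2 * S) < qm S c n \<and> qm S c n < real n * pi / (2 * S)"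
  using qm_even[OF assms] qm_odd[OF assms(1,2)] by blast

lemma chi_at_S_nonzero:
  assumes S: "S > 0" and c: "c > 0"
  shows "chi S c n S \<noteq> 0"
proof (cases "n = 0")
  case False
  note q = qm_interval[OF S c, of n]
  show ?thesis
  proof (cases "even n")
    case True
    then have "real n \<ge> 2" using False by (auto elim!: evenE)
    then have "(real n - 1) * pi / (2 * S) > 0" using S by simp
    then have "qm S c n > 0" using q False by linarith
    moreover have "tan (qm S c n * S) = - c * qm S c n" using qm_even[OF S c _ True] False by simp
    ultimately show ?thesis using True c by (auto simp: chi_def tan_def)
  next
    case odd: False
    then show ?thesis using qm_odd[OF S c odd] c by (auto simp: chi_def tan_def)
  qed
qed (simp add: chi_def qm_def)

lemma qm_0: "qm S c 0 = 0"
  by (simp add: qm_def)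

lemma qm_bounds:
  assumes S: "S > 0" and c: "c > 0"
  shows "0 \<le> qm S c n" and "qm S c n \<le> real n * pi / (2 * S)"
proof (atomize (full), cases "n = 0")
  case False
  then have "(real n - 1) * pi / (2 * S) \<ge> 0" using S by simp
  then show "0 \<le> qm S c n \<and> qm S c n \<le> real n * pi / (2 * S)"
    using qm_interval[OF S c, of n] False by linarith
qed (simp add: qm_0)

lemma strict_mono_qm:
  assumes S: "S > 0" and c: "c > 0"
  shows "strict_mono (qm S c)"
proof (rule strict_monoI)
  fix n n' :: nat assume "n < n'"
  then have "real n * pi / (2 * S) \<le> (real n' - 1) * pi / (2 * S)"
    using S by (intro divide_right_mono mult_right_mono) auto
  then show "qm S c n < qm S c n'"
    using qm_bounds(2)[OF S c, of n] qm_interval[OF S c, of n'] \<open>n < n'\<close> by linarith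
qed

lemma cnorm_pos:
  assumes S: "S > 0" and c: "c > 0"
  shows "cnorm S c n > 0"
proof -
  define u where "u = (\<lambda>z. S powr (-1/2) * chi S c n z)"
  define K where "K = integral {-S..S} (\<lambda>z. (u z)\<^sup>2) + c * ((u S)\<^sup>2 + (u (-S))\<^sup>2)"
  have scale: "integral {-S..S} (\<lambda>z. \<bar>x * S powr (-1/2) * chi S c n z\<bar>\<^sup>2)
      + c * (\<bar>x * S powr (-1/2) * chi S c n S\<bar>\<^sup>2 + \<bar>x * S powr (-1/2) * chi S c n (-S)\<bar>\<^sup>2)
      = x\<^sup>2 * K" for x
  proof -
    have "\<bar>x * S powr (-1/2) * chi S c n z\<bar>\<^sup>2 = x\<^sup>2 * (u z)\<^sup>2" for z
      by (simp add: u_def power_mult_distrib)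
    then show ?thesis by (simp only:) (simp add: K_def algebra_simps)
  qed
  have "continuous_on {-S..S} (\<lambda>z. (u z)\<^sup>2)"
    unfolding u_def chi_def by (cases "even n") (auto intro!: continuous_intros)
  then have "integral {-S..S} (\<lambda>z. (u z)\<^sup>2) \<ge> 0"
    by (intro integral_nonneg integrable_continuous_interval) auto
  moreover have "(u S)\<^sup>2 > 0" using chi_at_S_nonzero[OF S c] S by (simp add: u_def)
  ultimately have K: "K > 0" using c unfolding K_def
    by (simp add: add_nonneg_pos add_pos_nonneg)
  have "\<exists>!x. x > 0 \<and> x\<^sup>2 * K = 1"
  proof (rule ex1I)
    show "1 / sqrt K > 0 \<and> (1 / sqrt K)\<^sup>2 * K = 1" using K by (simp add: power_divide)
    fix y assume "y > 0 \<and> y\<^sup>2 * K = 1"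
    then have "sqrt (1 / K) = y" using K by (intro real_sqrt_unique) (auto simp: field_simps)
    then show "y = 1 / sqrt K" by (simp add: real_sqrt_divide)
  qed
  from theI'[OF this] show ?thesis unfolding cnorm_def scale by blast
qed

lemma dm_nonzero:
  assumes "S > 0" "c > 0"
  shows "dm S c n \<noteq> 0"
  using cnorm_pos[OF assms, of n] chi_at_S_nonzero[OF assms, of n] assms by (simp add: dm_def)

lemma omega_pos: "\<mu> > 0 \<Longrightarrow> omega S c \<mu> n > 0"
  by (simp add: omega_def add_nonneg_pos)

lemma omega_le:
  assumes "S > 0" "c > 0" "\<mu> > 0"
  shows "omega S c \<mu> n \<le> real n * (pi / (2 * S)) + \<mu>"
proof -
  have "omega S c \<mu> n \<le> sqrt ((qm S c n)\<^sup>2) + sqrt (\<mu>\<^sup>2)"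
    unfolding omega_def by (intro sqrt_add_le_add_sqrt) auto
  then show ?thesis
    using qm_bounds[OF assms(1,2), of n] assms(3) by simp
qed

lemma inj_omega:
  assumes "S > 0" "c > 0"
  shows "inj (omega S c \<mu>)"
proof (rule strict_mono_imp_inj_on, rule strict_monoI)
  fix n n' :: nat assume "n < n'"
  then have "qm S c n < qm S c n'" using strict_mono_qm[OF assms] by (simp add: strict_monoD)
  then have "(qm S c n)\<^sup>2 < (qm S c n')\<^sup>2"
    using qm_bounds(1)[OF assms] by (simp add: power_strict_mono)
  then show "omega S c \<mu> n < omega S c \<mu> n'" by (simp add: omega_def)
qed

lemma smear_eq_0_of_phi_bdry_eq:
  assumes S: "S > 0" and c: "c > 0" and \<mu>: "\<mu> > 0" and sg: "sg = 1 \<or> sg = -1"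
    and eq: "phi_m_bdry S c \<mu> sg m fm = phi_bdry S c \<mu> sg f" and n: "n \<noteq> m"
  shows "smear f (omega S c \<mu> n) = 0 \<and> smear f (- omega S c \<mu> n) = 0"
proof -
  define k where "k = complex_of_real (sg ^ n * dm S c n * (2 * omega S c \<mu> n) powr (-1/2))"
  have "k \<noteq> 0"
    using sg dm_nonzero[OF S c, of n] omega_pos[OF \<mu>, of S c n] by (auto simp: k_def)
  moreover from eq have "fst (phi_m_bdry S c \<mu> sg m fm) n = fst (phi_bdry S c \<mu> sg f) n"
    and "snd (phi_m_bdry S c \<mu> sg m fm) n = snd (phi_bdry S c \<mu> sg f) n" by auto
  then have "k * smear f (omega S c \<mu> n) = 0" "k * smear f (- omega S c \<mu> n) = 0"
    using n by (simp_all add: phi_m_bdry_def phi_bdry_def k_def)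
  ultimately show ?thesis by simp
qed

lemma test_fun_continuous:
  assumes "test_fun f"
  shows "continuous_on UNIV f"
proof -
  obtain D where "D 0 = f" and "\<And>k t. (D k has_vector_derivative D (Suc k) t) (at t)"
    using assms unfolding test_fun_def smooth_fun_def by blast
  then show ?thesis
    by (metis continuous_at_imp_continuous_on has_vector_derivative_continuous)
qed

section \<open>The Fourier-Laplace transform of a function on an interval\<close>

definition fourier_laplace :: "(real \<Rightarrow> complex) \<Rightarrow> real \<Rightarrow> real \<Rightarrow> complex \<Rightarrow> complex" where
  "fourier_laplace f a b z = integral {a..b} (\<lambda>t. f t * exp (- \<i> * z * of_real t))"

lemma fourier_laplace_has_field_derivative:
  assumes f: "continuous_on {a..b} f"
  shows "(fourier_laplace f a b has_field_derivative
           fourier_laplace (\<lambda>t. - \<i> * of_real t * f t) a b z) (at z)"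
proof -
  have "((\<lambda>z. integral (cbox a b) (\<lambda>t. f t * exp (- \<i> * z * of_real t))) has_field_derivative
         integral (cbox a b) (\<lambda>t. - \<i> * of_real t * f t * exp (- \<i> * z * of_real t))) (at z within UNIV)"
  proof (rule leibniz_rule_field_derivative)
    show "((\<lambda>z. f t * exp (- \<i> * z * of_real t)) has_field_derivative
           - \<i> * of_real t * f t * exp (- \<i> * w * of_real t)) (at w within UNIV)" for w t
      by (auto intro!: derivative_eq_intros simp: algebra_simps)
    show "(\<lambda>t. f t * exp (- \<i> * w * of_real t)) integrable_on cbox a b" for w
      using f by (auto intro!: integrable_continuous_interval continuous_intros)
    show "continuous_on (UNIV \<times> cbox a b) (\<lambda>(w, t). - \<i> * of_real t * f t * exp (- \<i> * w * of_real t))"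
      using f unfolding split_beta
      by (auto intro!: continuous_intros continuous_on_compose2[OF f continuous_on_snd])
  qed auto
  then show ?thesis by (simp add: fourier_laplace_def[abs_def])
qed

lemma holomorphic_fourier_laplace:
  "continuous_on {a..b} f \<Longrightarrow> fourier_laplace f a b holomorphic_on UNIV"
  using fourier_laplace_has_field_derivative
  unfolding holomorphic_on_def field_differentiable_def by blast

lemma fourier_laplace_eq_0_imp_moments_eq_0:
  assumes f: "continuous_on {a..b} f" and zero: "\<And>z. fourier_laplace f a b z = 0"
  shows "integral {a..b} (\<lambda>t. of_real t ^ k * f t) = 0"
proof -
  \<comment> \<open>The k-th derivative of the transform is the transform of (-i t)^k f t.\<close>
  have "fourier_laplace (\<lambda>t. (- \<i> * of_real t) ^ k * f t) a b z = 0" for z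
  proof (induction k arbitrary: z)
    case (Suc k)
    have "continuous_on {a..b} (\<lambda>t. (- \<i> * of_real t) ^ k * f t)"
      using f by (intro continuous_intros)
    from fourier_laplace_has_field_derivative[OF this]
    have "(fourier_laplace (\<lambda>t. (- \<i> * of_real t) ^ k * f t) a b has_field_derivative
            fourier_laplace (\<lambda>t. (- \<i> * of_real t) ^ Suc k * f t) a b z) (at z)"
      by (simp add: mult.assoc)
    moreover have "fourier_laplace (\<lambda>t. (- \<i> * of_real t) ^ k * f t) a b = (\<lambda>_. 0)"
      using Suc.IH by (intro ext)
    then have "(fourier_laplace (\<lambda>t. (- \<i> * of_real t) ^ k * f t) a b has_field_derivative 0) (at z)"
      by simp
    ultimately show ?case by (rule DERIV_unique)
  qed (simp add: zero)
  from this[of 0] have "(- \<i>) ^ k * integral {a..b} (\<lambda>t. of_real t ^ k * f t) = 0"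
    unfolding fourier_laplace_def power_mult_distrib by (simp add: mult.assoc)
  then show ?thesis by simp
qed

lemma moments_eq_0_imp_eq_0_real:
  fixes g :: "real \<Rightarrow> real"
  assumes g: "continuous_on {a..b} g" and ab: "a < b"
    and moments: "\<And>k. integral {a..b} (\<lambda>t. t ^ k * g t) = 0" and t: "t \<in> {a..b}"
  shows "g t = 0"
proof -
  have int: "(\<lambda>t. p t * g t) integrable_on {a..b}" if "continuous_on {a..b} p" for p
    using that g by (intro integrable_continuous_interval continuous_intros)
  have poly: "integral {a..b} (\<lambda>t. p t * g t) = 0" if pp: "real_polynomial_function p" for p
  proof -
    obtain c n where p: "p = (\<lambda>x. \<Sum>i\<le>n. c i * x ^ i)"
      using pp real_polynomial_function_iff_sum by auto
    have "integral {a..b} (\<lambda>t. p t * g t) = (\<Sum>i\<le>n. c i * integral {a..b} (\<lambda>t. t ^ i * g t))"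
      unfolding p sum_distrib_right
      by (subst integral_sum) (auto simp: mult.assoc intro!: integrable_continuous_interval continuous_intros g)
    then show ?thesis by (simp add: moments)
  qed
  define Y where "Y = integral {a..b} (\<lambda>t. \<bar>g t\<bar>)"
  have Y: "Y \<ge> 0"
    unfolding Y_def using g by (intro integral_nonneg integrable_continuous_interval continuous_intros) auto
  \<comment> \<open>Approximating g by a polynomial p, the integral of g^2 equals that of (g - p) g.\<close>
  have "integral {a..b} (\<lambda>t. (g t)\<^sup>2) \<le> 0 + e" if e: "e > 0" for e
  proof -
    obtain p where p: "real_polynomial_function p" "\<And>x. x \<in> {a..b} \<Longrightarrow> \<bar>g x - p x\<bar> < e / (Y + 1)"
      using Stone_Weierstrass_real_polynomial_function[OF compact_Icc g, of "e / (Y + 1)"] e Y by auto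
    have cp: "continuous_on {a..b} p"
      using p(1) continuous_on_polymonial_function real_polynomial_function_eq by blast
    have "integral {a..b} (\<lambda>t. (g t)\<^sup>2) = integral {a..b} (\<lambda>t. (g t - p t) * g t + p t * g t)"
      by (simp add: power2_eq_square left_diff_distrib)
    also have "\<dots> = integral {a..b} (\<lambda>t. (g t - p t) * g t)"
      using poly[OF p(1)] by (subst integral_add) (auto intro!: int continuous_intros g cp)
    also have "\<dots> \<le> integral {a..b} (\<lambda>t. e / (Y + 1) * \<bar>g t\<bar>)"
    proof (rule integral_le)
      fix t assume "t \<in> {a..b}"
      have "(g t - p t) * g t \<le> \<bar>g t - p t\<bar> * \<bar>g t\<bar>" by (metis abs_ge_self abs_mult)
      also have "\<dots> \<le> e / (Y + 1) * \<bar>g t\<bar>"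
        using p(2)[OF \<open>t \<in> {a..b}\<close>] by (intro mult_right_mono) auto
      finally show "(g t - p t) * g t \<le> e / (Y + 1) * \<bar>g t\<bar>" .
    qed (use Y in \<open>auto intro!: integrable_continuous_interval continuous_intros g cp\<close>)
    also have "\<dots> = e * (Y / (Y + 1))" by (simp add: Y_def)
    also have "\<dots> \<le> 0 + e" using e Y mult_left_le[of "Y / (Y + 1)" e] by simp
    finally show ?thesis .
  qed
  then have "integral {a..b} (\<lambda>t. (g t)\<^sup>2) \<le> 0" by (rule field_le_epsilon)
  moreover have "integral {a..b} (\<lambda>t. (g t)\<^sup>2) \<ge> 0"
    using g by (intro integral_nonneg integrable_continuous_interval continuous_intros) auto
  ultimately have "integral {a..b} (\<lambda>t. (g t)\<^sup>2) = 0" by linarith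
  moreover have "continuous_on {a..b} (\<lambda>t. (g t)\<^sup>2)" using g by (intro continuous_intros)
  ultimately show ?thesis using integral_eq_0_iff[of a b "\<lambda>t. (g t)\<^sup>2"] ab t by simp
qed

lemma moments_eq_0_imp_eq_0:
  fixes f :: "real \<Rightarrow> complex"
  assumes f: "continuous_on {a..b} f" and ab: "a < b"
    and moments: "\<And>k. integral {a..b} (\<lambda>t. of_real t ^ k * f t) = 0" and t: "t \<in> {a..b}"
  shows "f t = 0"
proof -
  have int: "((\<lambda>t. of_real t ^ k * f t) has_integral 0) {a..b}" for k
  proof -
    have "(\<lambda>t. of_real t ^ k * f t) integrable_on {a..b}"
      using f by (intro integrable_continuous_interval continuous_intros)
    then show ?thesis using moments[of k] by (metis has_integral_integrable_integral)
  qed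
  have moments': "integral {a..b} (\<lambda>t. t ^ k * Re (f t)) = 0" "integral {a..b} (\<lambda>t. t ^ k * Im (f t)) = 0" for k
    using integral_unique[OF has_integral_Re[OF int[of k]]] integral_unique[OF has_integral_Im[OF int[of k]]]
    by (simp_all flip: of_real_power)
  have "continuous_on {a..b} (\<lambda>t. Re (f t))" "continuous_on {a..b} (\<lambda>t. Im (f t))"
    using f by (auto intro: continuous_intros)
  then have "Re (f t) = 0" "Im (f t) = 0"
    using moments_eq_0_imp_eq_0_real[OF _ ab _ t] moments' by blast+
  then show ?thesis by (simp add: complex_eq_iff)
qed

lemma fourier_laplace_eq_0_imp_eq_0:
  assumes "continuous_on {a..b} f" "a < b" "\<And>z. fourier_laplace f a b z = 0" "t \<in> {a..b}"
  shows "f t = 0"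
  using moments_eq_0_imp_eq_0[OF assms(1,2) fourier_laplace_eq_0_imp_moments_eq_0[OF assms(1,3)] assms(4)] .

lemma norm_fourier_laplace_centered_le:
  assumes f: "continuous_on {a..b} f"
  shows "norm (fourier_laplace f a b z * exp (\<i> * z * of_real ((a + b) / 2)))
         \<le> integral {a..b} (\<lambda>t. norm (f t)) * exp (norm z * ((b - a) / 2))"
proof -
  define t0 where "t0 = (a + b) / 2"
  have "fourier_laplace f a b z * exp (\<i> * z * of_real t0)
        = integral {a..b} (\<lambda>t. f t * exp (- \<i> * z * of_real (t - t0)))"
  proof -
    have shift: "f t * exp (- \<i> * z * of_real t) * exp (\<i> * z * of_real t0)
          = f t * exp (- \<i> * z * of_real (t - t0))" for t
      by (simp add: mult.assoc right_diff_distrib flip: exp_add)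
    have "fourier_laplace f a b z * exp (\<i> * z * of_real t0)
          = integral {a..b} (\<lambda>t. f t * exp (- \<i> * z * of_real t) * exp (\<i> * z * of_real t0))"
      by (simp add: fourier_laplace_def)
    then show ?thesis by (simp only: shift)
  qed
  also have "norm \<dots> \<le> integral {a..b} (\<lambda>t. norm (f t) * exp (norm z * ((b - a) / 2)))"
  proof (rule integral_norm_bound_integral)
    fix t assume t: "t \<in> {a..b}"
    have "Im z * (t - t0) \<le> \<bar>Im z\<bar> * \<bar>t - t0\<bar>"
      by (metis abs_ge_self abs_mult)
    also have "\<dots> \<le> norm z * \<bar>t - t0\<bar>"
      by (intro mult_right_mono abs_Im_le_cmod) auto
    also have "\<dots> \<le> norm z * ((b - a) / 2)"
      using t by (intro mult_left_mono) (auto simp: t0_def abs_le_iff field_simps)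
    finally show "norm (f t * exp (- \<i> * z * of_real (t - t0))) \<le> norm (f t) * exp (norm z * ((b - a) / 2))"
      by (simp add: norm_mult norm_exp_eq_Re mult_left_mono)
  qed (use f in \<open>auto intro!: integrable_continuous_interval continuous_intros\<close>)
  finally show ?thesis using f by (simp add: t0_def)
qed

lemma smear_eq_fourier_laplace:
  assumes "\<And>t. t \<notin> {a..b} \<Longrightarrow> f t = 0"
  shows "smear f w = fourier_laplace f a b (of_real w)"
proof -
  have "smear f w = integral UNIV (\<lambda>t. if t \<in> {a..b} then f t * exp (- \<i> * of_real (w * t)) else 0)"
    unfolding smear_def by (rule arg_cong[where f = "integral UNIV"]) (auto simp: assms)
  also have "\<dots> = integral {a..b} (\<lambda>t. f t * exp (- \<i> * of_real (w * t)))"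
    by (rule integral_restrict_UNIV)
  finally show ?thesis by (simp add: fourier_laplace_def mult_ac)
qed

section \<open>Zeros of entire functions of exponential type\<close>

lemma jensen_inequality:
  fixes H :: "complex \<Rightarrow> complex"
  assumes "finite A" and "H holomorphic_on UNIV" and "\<rho> > 0"
    and "\<And>w. norm w = \<rho> \<Longrightarrow> norm (H w) \<le> M" and "H 0 \<noteq> 0"
    and "\<And>a. a \<in> A \<Longrightarrow> H a = 0 \<and> norm a < \<rho>"
  shows "norm (H 0) * (\<Prod>a\<in>A. \<rho> / norm a) \<le> M"
  using assms
proof (induction A arbitrary: H rule: finite_induct)
  case empty
  have "norm (H 0) \<le> M"
  proof (rule maximum_modulus_frontier[of H "cball 0 \<rho>"])
    show "H holomorphic_on interior (cball 0 \<rho>)" "continuous_on (closure (cball 0 \<rho>)) H"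
      using empty.prems(1) holomorphic_on_imp_continuous_on
      by (auto intro: holomorphic_on_subset continuous_on_subset)
  qed (use empty.prems in \<open>auto simp: frontier_cball\<close>)
  then show ?case by simp
next
  case (insert a A)
  have Ha: "H a = 0" and a: "norm a < \<rho>" using insert.prems(5) by auto
  have a0: "a \<noteq> 0" using Ha insert.prems(4) by auto
  \<comment> \<open>Divide out the zero a and multiply by the Blaschke factor, which has modulus \<rho> on the circle.\<close>
  define Q where "Q = (\<lambda>z. if z = a then deriv H a else (H z - H a) / (z - a))"
  define H1 where "H1 = (\<lambda>z. Q z * ((of_real (\<rho>\<^sup>2) - cnj a * z) / of_real \<rho>))"
  have "Q holomorphic_on UNIV"
    unfolding Q_def by (rule pole_lemma_open[OF insert.prems(1)]) simp
  then have hol1: "H1 holomorphic_on UNIV"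
    unfolding H1_def by (intro holomorphic_intros) (use insert.prems(2) in auto)
  have Qz: "Q z = H z / (z - a)" if "z \<noteq> a" for z using that Ha by (simp add: Q_def)
  have H1_0: "H1 0 = - H 0 * \<rho> / a"
    using a0 insert.prems(2) by (simp add: H1_def Qz power2_eq_square field_simps)
  have "norm (H1 w) \<le> M" if w: "norm w = \<rho>" for w
  proof -
    have wa: "w \<noteq> a" using w a by auto
    have "of_real (\<rho>\<^sup>2) - cnj a * w = w * cnj (w - a)"
      using w complex_norm_square[of w] by (simp add: algebra_simps)
    then have "norm (of_real (\<rho>\<^sup>2) - cnj a * w) = \<rho> * norm (w - a)"
      using w by (simp add: norm_mult flip: complex_cnj_diff)
    then have "norm (H1 w) = norm (H w)"
      using wa insert.prems(2) by (simp add: H1_def Qz norm_mult norm_divide)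
    then show ?thesis using insert.prems(3)[OF w] by simp
  qed
  moreover have "H1 0 \<noteq> 0" using H1_0 insert.prems(2,4) a0 by simp
  moreover have "H1 b = 0 \<and> norm b < \<rho>" if "b \<in> A" for b
  proof -
    have "b \<noteq> a" using that insert.hyps by auto
    then show ?thesis using that insert.prems(5) by (simp add: H1_def Qz)
  qed
  ultimately have "norm (H1 0) * (\<Prod>a\<in>A. \<rho> / norm a) \<le> M"
    using insert.IH[OF hol1 insert.prems(2)] by blast
  moreover have "norm (H1 0) = norm (H 0) * (\<rho> / norm a)"
    using H1_0 insert.prems(2) by (simp add: norm_mult norm_divide)
  ultimately show ?case using insert.hyps by (simp add: mult_ac)
qed

lemma prod_Un_image_disjoint:
  assumes "finite Z" "inj_on u Z" "inj_on v Z" "u ` Z \<inter> v ` Z = {}"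
  shows "(\<Prod>x\<in>u ` Z \<union> v ` Z. g x) = (\<Prod>n\<in>Z. g (u n) * g (v n))"
  using assms by (simp add: prod.union_disjoint prod.reindex prod.distrib)

lemma sum_ln_le:
  fixes B :: real
  assumes B: "B > 0"
  shows "(\<Sum>n<N. ln (real n + B)) \<le> (real N + B) * ln (real N + B) - real N - B * ln B"
proof (induction N)
  case (Suc N)
  define x where "x = real N + B"
  have x: "x > 0" using B by (simp add: x_def)
  \<comment> \<open>The increment of x ln x - x over [x, x + 1] dominates ln x.\<close>
  have "ln (x / (x + 1)) \<le> x / (x + 1) - 1" using x by (intro ln_le_minus_one) simp
  then have "1 \<le> (x + 1) * (ln (x + 1) - ln x)"
    using x by (simp add: ln_div field_simps)
  then show ?case using Suc.IH by (simp add: x_def algebra_simps)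
qed simp

lemma sum_ln_ratio_ge:
  fixes B :: real
  assumes B: "B > 0"
  shows "real N - (B + 1) * ln (real N + B) + (B + 1) * ln B
         \<le> (\<Sum>n | n < N \<and> n \<noteq> m. ln ((real N + B) / (real n + B)))"
proof -
  define r where "r = (\<lambda>n::nat. ln ((real N + B) / (real n + B)))"
  have r: "r n = ln (real N + B) - ln (real n + B)" for n
    using B by (simp add: r_def ln_div add_pos_nonneg)
  have "real N - B * ln (real N + B) + B * ln B \<le> (\<Sum>n<N. r n)"
    using sum_ln_le[OF B, of N] by (simp add: r sum_subtractf algebra_simps)
  moreover have "(\<Sum>n<N. r n) \<le> (\<Sum>n | n < N \<and> n \<noteq> m. r n) + (ln (real N + B) - ln B)"
  proof (cases "m < N")
    case True
    then have "{..<N} = insert m {n. n < N \<and> n \<noteq> m}" by auto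
    moreover have "r m \<le> ln (real N + B) - ln B" using B by (simp add: r)
    ultimately show ?thesis by simp
  next
    case False
    then have "{..<N} = {n. n < N \<and> n \<noteq> m}" by auto
    moreover have "ln B \<le> ln (real N + B)" using B by simp
    ultimately show ?thesis by simp
  qed
  ultimately show ?thesis by (simp add: r_def algebra_simps)
qed

lemma jensen_bound_symmetric_zeros:
  fixes G :: "complex \<Rightarrow> complex" and \<omega> :: "nat \<Rightarrow> real"
  assumes hol: "G holomorphic_on UNIV" and z0: "G z0 \<noteq> 0"
    and growth: "\<And>z. norm (G z) \<le> Y * exp (\<tau> * norm z)" and \<tau>: "\<tau> \<ge> 0"
    and inj: "inj \<omega>" and pos: "\<And>n. \<omega> n > 0"
    and zeros: "\<And>n. n \<noteq> m \<Longrightarrow> G (of_real (\<omega> n)) = 0 \<and> G (- of_real (\<omega> n)) = 0"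
    and h: "h > 0" and B: "B > 0" and near: "\<And>n. \<omega> n + norm z0 \<le> (real n + B) * h"
  shows "norm (G z0) * (\<Prod>n | n < N \<and> n \<noteq> m. ((real N + B) / (real n + B))\<^sup>2)
         \<le> Y * exp (\<tau> * ((real N + B) * h + norm z0))"
proof -
  define \<rho> where "\<rho> = (real N + B) * h"
  define Z where "Z = {n. n < N \<and> n \<noteq> m}"
  define u v where "u = (\<lambda>n. of_real (\<omega> n) - z0)" and "v = (\<lambda>n. - of_real (\<omega> n) - z0)"
  define H where "H = (\<lambda>w. G (w + z0))"
  have \<rho>: "\<rho> > 0" using B h by (simp add: \<rho>_def)
  have "0 < Y * exp (\<tau> * norm z0)" using growth[of z0] z0 by (meson less_le_trans zero_less_norm_iff)
  then have Y: "Y \<ge> 0" by (simp add: zero_less_mult_iff)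
  have zero_near: "H a = 0 \<and> norm a \<le> (real n + B) * h" if "n \<in> Z" "a = u n \<or> a = v n" for n a
  proof -
    have "norm a \<le> \<omega> n + norm z0"
      using that(2) pos[of n] norm_triangle_ineq4[of "of_real (\<omega> n)" z0]
        norm_triangle_ineq4[of "- of_real (\<omega> n)" z0] by (auto simp: u_def v_def)
    then show ?thesis using near[of n] zeros[of n] that by (auto simp: H_def u_def v_def Z_def)
  qed
  have jensen: "norm (H 0) * (\<Prod>a\<in>u ` Z \<union> v ` Z. \<rho> / norm a) \<le> Y * exp (\<tau> * (\<rho> + norm z0))"
  proof (rule jensen_inequality)
    show "H holomorphic_on UNIV"
      using holomorphic_on_compose_gen[of "\<lambda>w. w + z0" UNIV G UNIV] hol
      by (simp add: H_def o_def holomorphic_intros)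
    show "norm (H w) \<le> Y * exp (\<tau> * (\<rho> + norm z0))" if "norm w = \<rho>" for w
    proof -
      have "norm (H w) \<le> Y * exp (\<tau> * norm (w + z0))" unfolding H_def by (rule growth)
      also have "\<dots> \<le> Y * exp (\<tau> * (\<rho> + norm z0))"
        using norm_triangle_ineq[of w z0] that \<tau> Y by (intro mult_left_mono) (auto intro: mult_left_mono)
      finally show ?thesis .
    qed
    show "H a = 0 \<and> norm a < \<rho>" if a: "a \<in> u ` Z \<union> v ` Z" for a
    proof -
      obtain n where n: "n \<in> Z" "a = u n \<or> a = v n" using a by blast
      then have "(real n + B) * h < \<rho>" using h by (simp add: \<rho>_def Z_def)
      with zero_near[OF n] show ?thesis by simp
    qed
  qed (use \<rho> z0 in \<open>auto simp: H_def Z_def\<close>)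
  have split: "(\<Prod>a\<in>u ` Z \<union> v ` Z. \<rho> / norm a) = (\<Prod>n\<in>Z. \<rho> / norm (u n) * (\<rho> / norm (v n)))"
  proof (rule prod_Un_image_disjoint)
    show "inj_on u Z" "inj_on v Z" using inj by (auto simp: u_def v_def inj_on_def inj_def)
    have "u n \<noteq> v n'" for n n'
    proof
      assume "u n = v n'"
      then have "of_real (\<omega> n) = (of_real (- \<omega> n') :: complex)" by (simp add: u_def v_def)
      then have "\<omega> n = - \<omega> n'" by (simp only: of_real_eq_iff)
      with pos[of n] pos[of n'] show False by simp
    qed
    then show "u ` Z \<inter> v ` Z = {}" by blast
  qed (simp add: Z_def)
  have "(\<Prod>n\<in>Z. ((real N + B) / (real n + B))\<^sup>2) \<le> (\<Prod>n\<in>Z. \<rho> / norm (u n) * (\<rho> / norm (v n)))"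
  proof (rule prod_mono)
    fix n assume n: "n \<in> Z"
    have ratio_le: "(real N + B) / (real n + B) \<le> \<rho> / norm a" if "a = u n \<or> a = v n" for a
    proof -
      have "a \<noteq> 0" using zero_near[OF n that] z0 by (auto simp: H_def)
      then have "(real N + B) / (real n + B) = \<rho> / ((real n + B) * h)" using h by (simp add: \<rho>_def)
      also have "\<dots> \<le> \<rho> / norm a"
        using zero_near[OF n that] \<rho> \<open>a \<noteq> 0\<close> B h by (intro divide_left_mono) auto
      finally show ?thesis .
    qed
    have "0 \<le> (real N + B) / (real n + B)" using B by simp
    moreover have "(real N + B) / (real n + B) * ((real N + B) / (real n + B))
                   \<le> \<rho> / norm (u n) * (\<rho> / norm (v n))"
      using ratio_le[of "u n"] ratio_le[of "v n"] \<open>0 \<le> (real N + B) / (real n + B)\<close>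
      by (intro mult_mono) auto
    ultimately show "0 \<le> ((real N + B) / (real n + B))\<^sup>2 \<and>
          ((real N + B) / (real n + B))\<^sup>2 \<le> \<rho> / norm (u n) * (\<rho> / norm (v n))"
      by (simp add: power2_eq_square)
  qed
  then have "norm (G z0) * (\<Prod>n\<in>Z. ((real N + B) / (real n + B))\<^sup>2)
             \<le> norm (H 0) * (\<Prod>a\<in>u ` Z \<union> v ` Z. \<rho> / norm a)"
    unfolding split by (simp add: H_def mult_left_mono)
  also note jensen
  finally show ?thesis by (simp add: Z_def \<rho>_def)
qed

lemma exponential_type_zeros_density:
  fixes G :: "complex \<Rightarrow> complex" and \<omega> :: "nat \<Rightarrow> real"
  assumes hol: "G holomorphic_on UNIV" and z0: "G z0 \<noteq> 0"
    and growth: "\<And>z. norm (G z) \<le> Y * exp (\<tau> * norm z)" and \<tau>: "\<tau> \<ge> 0"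
    and inj: "inj \<omega>" and pos: "\<And>n. \<omega> n > 0"
    and zeros: "\<And>n. n \<noteq> m \<Longrightarrow> G (of_real (\<omega> n)) = 0 \<and> G (- of_real (\<omega> n)) = 0"
    and h: "h > 0" and le: "\<And>n. \<omega> n \<le> real n * h + \<mu>"
  shows "2 \<le> \<tau> * h"
proof (rule ccontr)
  assume "\<not> 2 \<le> \<tau> * h"
  then have \<kappa>: "2 - \<tau> * h > 0" by simp
  have "\<mu> > 0" using pos[of 0] le[of 0] by simp
  define B where "B = (\<mu> + norm z0) / h"
  have B: "B > 0" using \<open>\<mu> > 0\<close> h by (simp add: B_def add_pos_nonneg)
  have "(real n + B) * h = real n * h + \<mu> + norm z0" for n
    using h by (simp add: B_def field_simps)
  then have near: "\<omega> n + norm z0 \<le> (real n + B) * h" for n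
    using le[of n] by simp
  have "norm (G z0) > 0" using z0 by simp
  then have "0 < Y * exp (\<tau> * norm z0)" using growth[of z0] by (rule less_le_trans)
  then have Y: "Y > 0" by (simp add: zero_less_mult_iff)
  define C where "C = ln Y + \<tau> * (B * h + norm z0) - ln (norm (G z0)) - 2 * (B + 1) * ln B"
  have bound: "(2 - \<tau> * h) * real N - 2 * (B + 1) * ln (real N + B) \<le> C" for N
  proof -
    define \<Sigma> where "\<Sigma> = (\<Sum>n | n < N \<and> n \<noteq> m. ln ((real N + B) / (real n + B)))"
    have "((real N + B) / (real n + B))\<^sup>2 = exp (2 * ln ((real N + B) / (real n + B)))" for n
      using B exp_of_nat_mult[of 2 "ln ((real N + B) / (real n + B))"] by (simp add: add_pos_nonneg)
    then have "(\<Prod>n | n < N \<and> n \<noteq> m. ((real N + B) / (real n + B))\<^sup>2) = exp (2 * \<Sigma>)"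
      by (simp add: \<Sigma>_def exp_sum sum_distrib_left)
    then have "norm (G z0) * exp (2 * \<Sigma>) \<le> Y * exp (\<tau> * ((real N + B) * h + norm z0))"
      using jensen_bound_symmetric_zeros[where m = m and N = N, OF hol z0 growth \<tau> inj pos zeros h B near] by simp
    then have "ln (norm (G z0) * exp (2 * \<Sigma>)) \<le> ln (Y * exp (\<tau> * ((real N + B) * h + norm z0)))"
      using \<open>norm (G z0) > 0\<close> Y by (subst ln_le_cancel_iff) auto
    then have "ln (norm (G z0)) + 2 * \<Sigma> \<le> ln Y + \<tau> * ((real N + B) * h + norm z0)"
      using \<open>norm (G z0) > 0\<close> Y by (simp add: ln_mult)
    moreover have "real N - (B + 1) * ln (real N + B) + (B + 1) * ln B \<le> \<Sigma>"
      unfolding \<Sigma>_def by (rule sum_ln_ratio_ge[OF B])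
    ultimately show ?thesis by (simp add: C_def algebra_simps)
  qed
  have "filterlim (\<lambda>N::nat. (2 - \<tau> * h) * real N - 2 * (B + 1) * ln (real N + B)) at_top sequentially"
    using \<kappa> B by real_asymp
  then have "eventually (\<lambda>N. C + 1 \<le> (2 - \<tau> * h) * real N - 2 * (B + 1) * ln (real N + B)) sequentially"
    by (simp add: filterlim_at_top)
  then obtain N where "C + 1 \<le> (2 - \<tau> * h) * real N - 2 * (B + 1) * ln (real N + B)"
    unfolding eventually_sequentially by blast
  with bound[of N] show False by simp
qed

theorem proposition8:
  fixes S c \<mu> sg :: real and m :: nat and f fm :: "real \<Rightarrow> complex"
  assumes "S > 0" and "c > 0" and "\<mu> > 0"
    and "sg = 1 \<or> sg = -1"
    and "test_fun fm" and "test_fun f" and "\<exists>t. f t \<noteq> 0"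
    and "phi_m_bdry S c \<mu> sg m fm = phi_bdry S c \<mu> sg f"
  shows "\<not> (\<exists>a b. b - a < 8 / pi * S \<and> (\<forall>t. t \<notin> {a..b} \<longrightarrow> f t = 0))"
proof
  note S = assms(1) and c = assms(2) and \<mu> = assms(3)
  assume "\<exists>a b. b - a < 8 / pi * S \<and> (\<forall>t. t \<notin> {a..b} \<longrightarrow> f t = 0)"
  then obtain a b0 where "b0 - a < 8 / pi * S" and supp0: "\<And>t. t \<notin> {a..b0} \<Longrightarrow> f t = 0" by blast
  then obtain b where "b0 < b" and width: "b - a < 8 / pi * S" using dense[of b0 "a + 8 / pi * S"] by auto
  obtain t1 where "f t1 \<noteq> 0" using assms(7) by blast
  then have t1: "t1 \<in> {a..b}" and ab: "a < b" using supp0 \<open>b0 < b\<close> by force+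
  have supp: "\<And>t. t \<notin> {a..b} \<Longrightarrow> f t = 0" using supp0 \<open>b0 < b\<close> by auto
  have f: "continuous_on {a..b} f" using test_fun_continuous[OF assms(6)] by (rule continuous_on_subset) simp
  define G where "G = (\<lambda>z. fourier_laplace f a b z * exp (\<i> * z * of_real ((a + b) / 2)))"
  obtain z0 where "fourier_laplace f a b z0 \<noteq> 0"
    using fourier_laplace_eq_0_imp_eq_0[OF f ab _ t1] \<open>f t1 \<noteq> 0\<close> by blast
  have "2 \<le> (b - a) / 2 * (pi / (2 * S))"
  proof (rule exponential_type_zeros_density[where \<omega> = "omega S c \<mu>" and m = m and \<mu> = \<mu>])
    show "G holomorphic_on UNIV"
      unfolding G_def using holomorphic_fourier_laplace[OF f] by (intro holomorphic_intros)
    show "G z0 \<noteq> 0" using \<open>fourier_laplace f a b z0 \<noteq> 0\<close> by (simp add: G_def)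
    show "norm (G z) \<le> integral {a..b} (\<lambda>t. norm (f t)) * exp ((b - a) / 2 * norm z)" for z
      using norm_fourier_laplace_centered_le[OF f, of z] by (simp add: G_def mult.commute)
    show "G (of_real (omega S c \<mu> n)) = 0 \<and> G (- of_real (omega S c \<mu> n)) = 0" if "n \<noteq> m" for n
      using smear_eq_0_of_phi_bdry_eq[OF S c \<mu> assms(4,8) that] smear_eq_fourier_laplace[OF supp]
      by (simp add: G_def flip: of_real_minus)
  qed (use ab S inj_omega[OF S c] omega_pos[OF \<mu>] omega_le[OF S c \<mu>] in auto)
  then show False using width S by (simp add: field_simps)
qed

end
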